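(* Let $\xi$ be a real random variable with $\mathbb{E}\xi^2=\infty$ and let $M>0$. Then there exists $m_0$, depending only on $M$ and the distribution of $\xi$, such that for every $m>m_0$, if $B$ is an $m\times m$ random matrix whose entries are i.i.d. copies of $\xi$, then $$\|B\|\ge M\sqrt m$$ with probability at least $1-\exp(-M^2m)$.
   Context: $\|\cdot\|$ denotes the operator norm (Euclidean norm to Euclidean norm). *)

theory Defs
  imports "HOL-Probability.Probability"
begin

definition op_norm :: "nat \<Rightarrow> (nat \<times> nat \<Rightarrow> real) \<Rightarrow> real" where
  "op_norm m A = Sup {sqrt (\<Sum>i<m. (\<Sum>j<m. A (i,j) * x j)^2) | x :: nat \<Rightarrow> real.
                        (\<Sum>j<m. (x j)^2) \<le> 1}"

end

theory Submission
  imports Defs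
begin

text \<open>
  The operator norm dominates every column norm, so \<open>m \<cdot> \<parallel>B\<parallel>\<^sup>2\<close> is at least the squared
  Frobenius norm \<open>\<Sum>\<^sub>i\<^sub>j B\<^sub>i\<^sub>j\<^sup>2\<close>. Since \<open>\<xi>\<close> has infinite second moment, a truncation level \<open>K\<close> can be
  chosen with \<open>\<EE> min(\<xi>\<^sup>2, K) \<ge> 2M\<^sup>2\<close>. The \<open>m\<^sup>2\<close> independent variables \<open>min(B\<^sub>i\<^sub>j\<^sup>2, K)\<close> take values in
  \<open>[0, K]\<close>, so by Hoeffding's inequality their sum falls below \<open>M\<^sup>2m\<^sup>2\<close> (at most half its mean) with
  probability at most \<open>exp(-2M\<^sup>4m\<^sup>2/K\<^sup>2)\<close>, which is at most \<open>exp(-M\<^sup>2m)\<close> once \<open>m \<ge> K\<^sup>2/(2M\<^sup>2)\<close>.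
\<close>

section \<open>The operator norm and the Frobenius norm\<close>

definition mat_vec_norm :: "nat \<Rightarrow> (nat \<times> nat \<Rightarrow> real) \<Rightarrow> (nat \<Rightarrow> real) \<Rightarrow> real" where
  "mat_vec_norm m A x = sqrt (\<Sum>i<m. (\<Sum>j<m. A (i,j) * x j)^2)"

abbreviation unit_ball :: "nat \<Rightarrow> (nat \<Rightarrow> real) set" where
  "unit_ball m \<equiv> {x. (\<Sum>j<m. (x j)^2) \<le> 1}"

lemma unit_ball_nonempty: "unit_ball m \<noteq> {}"
  by (auto intro!: exI[of _ "\<lambda>_. 0"])

lemma op_norm_eq_Sup: "op_norm m A = Sup (mat_vec_norm m A ` unit_ball m)"
  unfolding op_norm_def mat_vec_norm_def by (simp add: image_def setcompr_eq_image)

lemma mat_vec_norm_le_frobenius: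
  assumes "x \<in> unit_ball m"
  shows "mat_vec_norm m A x \<le> sqrt (\<Sum>i<m. \<Sum>j<m. (A (i,j))^2)"
proof -
  have "(\<Sum>j<m. A (i,j) * x j)^2 \<le> (\<Sum>j<m. (A (i,j))^2)" for i
  proof -
    have "(\<Sum>j<m. A (i,j) * x j)^2 \<le> (\<Sum>j<m. (A (i,j))^2) * (\<Sum>j<m. (x j)^2)"
      by (rule Cauchy_Schwarz_ineq_sum)
    also have "\<dots> \<le> (\<Sum>j<m. (A (i,j))^2)"
      using assms by (intro mult_left_le sum_nonneg) auto
    finally show ?thesis .
  qed
  then show ?thesis
    unfolding mat_vec_norm_def by (intro real_sqrt_le_mono sum_mono)
qed

lemma bdd_above_mat_vec_norm: "bdd_above (mat_vec_norm m A ` unit_ball m)"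
  using mat_vec_norm_le_frobenius by (intro bdd_aboveI2) blast

lemma mat_vec_norm_le_op_norm: "x \<in> unit_ball m \<Longrightarrow> mat_vec_norm m A x \<le> op_norm m A"
  unfolding op_norm_eq_Sup by (intro cSup_upper imageI bdd_above_mat_vec_norm)

lemma op_norm_nonneg: "0 \<le> op_norm m A"
  using mat_vec_norm_le_op_norm[of "\<lambda>_. 0" m A] by (simp add: mat_vec_norm_def)

lemma column_norm_le_op_norm:
  assumes "k < m"
  shows "sqrt (\<Sum>i<m. (A (i,k))^2) \<le> op_norm m A"
proof -
  define e where "e j = (if j = k then 1 else 0 :: real)" for j
  have "(\<Sum>j<m. (e j)^2) = (\<Sum>j<m. if j = k then 1 else 0)"
    by (intro sum.cong) (auto simp: e_def)
  then have "(\<Sum>j<m. (e j)^2) = 1"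
    using assms by simp
  moreover have "(\<Sum>j<m. A (i,j) * e j) = A (i,k)" for i
    using assms by (simp add: e_def if_distrib cong: if_cong)
  ultimately show ?thesis
    using mat_vec_norm_le_op_norm[of e m A] by (simp add: mat_vec_norm_def)
qed

lemma frobenius_le_op_norm: "(\<Sum>i<m. \<Sum>j<m. (A (i,j))^2) \<le> real m * (op_norm m A)^2"
proof -
  have column: "(\<Sum>i<m. (A (i,j))^2) \<le> (op_norm m A)^2" if "j < m" for j
  proof -
    have nonneg: "0 \<le> (\<Sum>i<m. (A (i,j))^2)"
      by (intro sum_nonneg) simp
    moreover have "(sqrt (\<Sum>i<m. (A (i,j))^2))^2 \<le> (op_norm m A)^2"
      using column_norm_le_op_norm[OF that] real_sqrt_ge_zero[OF nonneg] by (rule power_mono)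
    ultimately show ?thesis by simp
  qed
  have "(\<Sum>i<m. \<Sum>j<m. (A (i,j))^2) = (\<Sum>j<m. \<Sum>i<m. (A (i,j))^2)"
    by (rule sum.swap)
  also have "\<dots> \<le> (\<Sum>j<m. (op_norm m A)^2)"
    using column by (intro sum_mono) simp
  also have "\<dots> = real m * (op_norm m A)^2"
    by simp
  finally show ?thesis .
qed

lemma op_norm_ge_of_frobenius:
  assumes "m > 0" and "M \<ge> 0" and "M^2 * (real m)^2 \<le> (\<Sum>i<m. \<Sum>j<m. (A (i,j))^2)"
  shows "M * sqrt (real m) \<le> op_norm m A"
proof -
  have "M^2 * real m * real m \<le> (op_norm m A)^2 * real m"
    using frobenius_le_op_norm[where m=m and A=A] assms(3) by (simp add: power2_eq_square algebra_simps)
  then have "(M * sqrt (real m))^2 \<le> (op_norm m A)^2"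
    using assms(1) by (simp add: power_mult_distrib)
  then show ?thesis
    using op_norm_nonneg by (rule power2_le_imp_le)
qed

text \<open>The operator norm is a supremum of continuous functions, hence lower semicontinuous.\<close>

lemma borel_measurable_op_norm: "op_norm m \<in> borel_measurable borel"
proof (rule borel_measurableI_greater)
  fix t
  have "mat_vec_norm m A ` unit_ball m \<noteq> {}" for A
    using unit_ball_nonempty by blast
  then have "{A. t < op_norm m A} = (\<Union>x\<in>unit_ball m. {A. t < mat_vec_norm m A x})"
    unfolding op_norm_eq_Sup by (auto simp: less_cSup_iff bdd_above_mat_vec_norm)
  moreover have "continuous_on UNIV (\<lambda>A. mat_vec_norm m A x)" for x
    unfolding mat_vec_norm_def by (intro continuous_intros continuous_on_product_coordinates)
  then have "open (\<Union>x\<in>unit_ball m. {A. t < mat_vec_norm m A x})"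
    by (intro open_UN ballI open_Collect_less continuous_on_const)
  ultimately show "{A \<in> space borel. t < op_norm m A} \<in> sets borel"
    by simp
qed

section \<open>Random matrices with i.i.d.\ entries\<close>

lemma measurable_PiM_id_borel:
  fixes I :: "'i::countable set" and \<mu> :: "real measure"
  assumes "sets \<mu> = sets borel"
  shows "(\<lambda>B. B) \<in> borel_measurable (PiM I (\<lambda>_. \<mu>))"
proof (rule measurable_coordinatewise_then_product)
  fix p
  show "(\<lambda>B. B p) \<in> borel_measurable (PiM I (\<lambda>_. \<mu>))"
  proof (cases "p \<in> I")
    case True
    then have "(\<lambda>B. B p) \<in> measurable (PiM I (\<lambda>_. \<mu>)) \<mu>"
      by (rule measurable_component_singleton)
    then show ?thesis
      by (simp only: measurable_cong_sets[OF refl assms])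
  next
    case False
    have "(\<lambda>B. B p) \<in> borel_measurable (PiM I (\<lambda>_. \<mu>)) \<longleftrightarrow>
        (\<lambda>_. undefined :: real) \<in> borel_measurable (PiM I (\<lambda>_. \<mu>))"
      by (rule measurable_cong) (use False in \<open>auto simp: space_PiM intro: PiE_arb\<close>)
    then show ?thesis
      by simp
  qed
qed

lemma indep_vars_PiM_components:
  assumes "\<And>i. i \<in> I \<Longrightarrow> prob_space (M i)" and "I \<noteq> {}"
  shows "prob_space.indep_vars (PiM I M) M (\<lambda>i x. x i) I"
proof -
  interpret P: prob_space "PiM I M"
    using assms(1) by (rule prob_space_PiM)
  have "distr (PiM I M) (PiM I M) (\<lambda>x. \<lambda>i\<in>I. x i) = distr (PiM I M) (PiM I M) (\<lambda>x. x)"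
    by (intro distr_cong) (auto simp: space_PiM PiE_def extensional_restrict)
  also have "\<dots> = PiM I M"
    by (rule distr_id)
  also have "\<dots> = PiM I (\<lambda>i. distr (PiM I M) (M i) (\<lambda>x. x i))"
    using assms(1) by (intro PiM_cong refl distr_PiM_component[symmetric])
  finally show ?thesis
    using assms(2) by (subst P.indep_vars_iff_distr_eq_PiM') auto
qed

lemma Hoeffding_PiM_iid_lower_tail:
  fixes \<mu> :: "'a measure" and f :: "'a \<Rightarrow> real" and a b \<epsilon> :: real and I :: "'i set"
  assumes "prob_space \<mu>" and f: "f \<in> borel_measurable \<mu>" and f_range: "\<And>x. f x \<in> {a..b}"
    and "finite I" "I \<noteq> {}" "a < b" "\<epsilon> \<ge> 0"
  defines "P \<equiv> PiM I (\<lambda>_. \<mu>)"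
  shows "measure P {B \<in> space P. (\<Sum>p\<in>I. f (B p)) \<le> card I * (\<integral>x. f x \<partial>\<mu>) - \<epsilon>}
           \<le> exp (-2 * \<epsilon>^2 / (card I * (b - a)^2))"
proof -
  interpret P: prob_space P
    unfolding P_def using assms(1) by (rule prob_space_PiM)
  have component: "(\<lambda>B. B p) \<in> measurable P \<mu>" if "p \<in> I" for p
    unfolding P_def using that by (rule measurable_component_singleton)
  have "P.indep_vars (\<lambda>_. \<mu>) (\<lambda>p B. B p) I"
    unfolding P_def using assms(1,5) by (intro indep_vars_PiM_components)
  then have indep: "P.indep_vars (\<lambda>_. borel) (\<lambda>p B. f (B p)) I"
    using P.indep_vars_compose2[of "\<lambda>_. \<mu>" _ I "\<lambda>_. f" "\<lambda>_. borel"] f by blast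
  have "P.expectation (\<lambda>B. f (B p)) = (\<integral>x. f x \<partial>\<mu>)" if "p \<in> I" for p
    using integral_distr[OF component[OF that] f] distr_PiM_component[of I "\<lambda>_. \<mu>" p]
      assms(1) that unfolding P_def by simp
  then have sum_expectation:
    "card I * (\<integral>x. f x \<partial>\<mu>) = (\<Sum>p\<in>I. P.expectation (\<lambda>B. f (B p)))"
    by simp
  interpret H: Hoeffding_ineq P I "\<lambda>p B. f (B p)" "\<lambda>_. a" "\<lambda>_. b"
      "card I * (\<integral>x. f x \<partial>\<mu>)"
  proof unfold_locales
    show "finite I" by (rule assms(4))
    show "P.indep_vars (\<lambda>_. borel) (\<lambda>p B. f (B p)) I" by (rule indep)
    show "AE x in P. f (x i) \<in> {a..b}" for i
      using f_range by (intro AE_I2) auto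
  qed (rule eq_reflection[OF sum_expectation])
  have "(\<Sum>p\<in>I. (b - a)^2) = card I * (b - a)^2"
    by simp
  moreover have "(\<Sum>p\<in>I. (b - a)^2) > 0"
    using assms(4-6) by (simp add: card_gt_0_iff)
  ultimately show ?thesis
    using H.Hoeffding_ineq_le[OF assms(7)] by simp
qed

section \<open>Truncated second moments\<close>

lemma borel_measurable_truncated_square:
  fixes \<mu> :: "real measure"
  assumes "sets \<mu> = sets borel"
  shows "(\<lambda>x. min (x^2) K) \<in> borel_measurable \<mu>"
  by (simp add: measurable_cong_sets[OF assms refl])

lemma truncated_second_moment_unbounded:
  fixes \<mu> :: "real measure"
  assumes "prob_space \<mu>" and "sets \<mu> = sets borel"
    and "(\<integral>\<^sup>+ x. ennreal (x^2) \<partial>\<mu>) = \<infinity>"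
  shows "\<exists>K>0. L \<le> (\<integral>x. min (x^2) K \<partial>\<mu>)"
proof -
  interpret prob_space \<mu> by (rule assms(1))
  note borel_measurable_truncated_square[OF assms(2), measurable]
  define f where "f n x = ennreal (min (x^2) (real n))" for n and x :: real
  have incseq: "incseq f"
    unfolding f_def by (intro incseq_SucI le_funI ennreal_leI) auto
  have SUP_f: "(SUP n. f n x) = ennreal (x^2)" for x
  proof (rule antisym)
    show "(SUP n. f n x) \<le> ennreal (x^2)"
      unfolding f_def by (intro SUP_least ennreal_leI) auto
    obtain n where "x^2 \<le> real n"
      using real_arch_simple by blast
    then show "ennreal (x^2) \<le> (SUP n. f n x)"
      unfolding f_def by (intro SUP_upper2[of n]) auto
  qed
  have "f n \<in> borel_measurable \<mu>" for n
    unfolding f_def by measurable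
  then have SUP_infinite: "(SUP n. \<integral>\<^sup>+ x. f n x \<partial>\<mu>) = \<infinity>"
    using nn_integral_monotone_convergence_SUP[OF incseq] assms(3) by (simp add: SUP_f)
  have "ennreal (max L 0) < (SUP n. \<integral>\<^sup>+ x. f n x \<partial>\<mu>)"
    unfolding SUP_infinite by simp
  then obtain n where n: "ennreal (max L 0) < (\<integral>\<^sup>+ x. f n x \<partial>\<mu>)"
    by (auto simp: less_SUP_iff)
  have "(\<integral>\<^sup>+ x. f n x \<partial>\<mu>) = ennreal (\<integral>x. min (x^2) (real n) \<partial>\<mu>)"
    unfolding f_def
    by (intro nn_integral_eq_integral integrable_const_bound[where B="real n"]) auto
  with n have less: "max L 0 < (\<integral>x. min (x^2) (real n) \<partial>\<mu>)"
    by (metis ennreal_less_iff max.cobounded2)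
  then have "n \<noteq> 0"
    by (intro notI) simp
  with less show ?thesis
    by (intro exI[of _ "real n"]) auto
qed

lemma op_norm_ge_sqrt_with_high_prob:
  fixes \<mu> :: "real measure" and M K :: real and m :: nat
  assumes "prob_space \<mu>" and "sets \<mu> = sets borel"
    and "M > 0" and "K > 0" and "m > 0"
    and truncated_moment: "2 * M^2 \<le> (\<integral>x. min (x^2) K \<partial>\<mu>)"
    and m_large: "K^2 \<le> 2 * M^2 * real m"
  defines "P \<equiv> PiM ({..<m} \<times> {..<m}) (\<lambda>_. \<mu>)"
  shows "measure P {B \<in> space P. op_norm m B \<ge> M * sqrt (real m)} \<ge> 1 - exp (- (M^2) * real m)"
proof -
  define I where "I = {..<m} \<times> {..<m}"
  define E where "E = (\<integral>x. min (x^2) K \<partial>\<mu>)"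
  define \<epsilon> where "\<epsilon> = (real m)^2 * (E - M^2)"
  define small where "small = {B \<in> space P. (\<Sum>p\<in>I. min ((B p)^2) K) \<le> card I * E - \<epsilon>}"
  interpret P: prob_space P
    unfolding P_def using assms(1) by (rule prob_space_PiM)
  have card_I: "card I = m^2"
    by (simp add: I_def card_cartesian_product power2_eq_square)
  have "2 * M^2 * (real m)^2 \<le> E * (real m)^2"
    unfolding E_def using truncated_moment by (rule mult_right_mono) simp
  then have \<epsilon>: "M^2 * (real m)^2 \<le> \<epsilon>"
    by (simp add: \<epsilon>_def algebra_simps)
  note f = borel_measurable_truncated_square[OF assms(2), of K]
  have "0 \<le> \<epsilon>"
    using \<epsilon> by (rule order_trans[rotated]) simp
  then have "P.prob small \<le> exp (-2 * \<epsilon>^2 / (card I * (K - 0)^2))"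
    unfolding small_def P_def E_def I_def using assms(1,4,5) f
    by (intro Hoeffding_PiM_iid_lower_tail[where f="\<lambda>x. min (x^2) K"]) auto
  also have "\<dots> \<le> exp (- (M^2) * real m)"
  proof -
    have "M^2 * real m * (K^2 * (real m)^2) \<le> M^2 * real m * (2 * M^2 * real m * (real m)^2)"
      using m_large by (intro mult_left_mono mult_right_mono) auto
    also have "\<dots> = 2 * (M^2 * (real m)^2)^2"
      by (simp add: power2_eq_square)
    also have "\<dots> \<le> 2 * \<epsilon>^2"
      using \<epsilon> by (intro mult_left_mono power_mono) auto
    finally show ?thesis
      using assms(4,5) by (simp add: card_I field_simps)
  qed
  finally have small_prob: "P.prob small \<le> exp (- (M^2) * real m)" .
  have "op_norm m \<in> borel_measurable P"
    using measurable_PiM_id_borel[OF assms(2)] borel_measurable_op_norm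
    unfolding P_def by (rule measurable_compose)
  then have large_event: "{B \<in> space P. M * sqrt (real m) \<le> op_norm m B} \<in> P.events"
    by measurable
  have "space P - small \<subseteq> {B \<in> space P. M * sqrt (real m) \<le> op_norm m B}"
  proof safe
    fix B assume "B \<in> space P" "B \<notin> small"
    then have "M^2 * (real m)^2 \<le> (\<Sum>p\<in>I. min ((B p)^2) K)"
      by (simp add: small_def card_I \<epsilon>_def algebra_simps)
    also have "\<dots> \<le> (\<Sum>p\<in>I. (B p)^2)"
      by (intro sum_mono) simp
    also have "\<dots> = (\<Sum>i<m. \<Sum>j<m. (B (i,j))^2)"
      by (simp add: I_def sum.cartesian_product)
    finally show "M * sqrt (real m) \<le> op_norm m B"
      using assms(3,5) by (intro op_norm_ge_of_frobenius) auto
  qed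
  then have "P.prob (space P - small) \<le> P.prob {B \<in> space P. M * sqrt (real m) \<le> op_norm m B}"
    using large_event by (rule P.finite_measure_mono)
  moreover have "small \<in> P.events"
    unfolding small_def I_def P_def using f
    by measurable
  ultimately show ?thesis
    using small_prob P.prob_compl by simp
qed

theorem mainTheorem19:
  fixes \<mu> :: "real measure" and M :: real
  assumes "prob_space \<mu>"
    and "sets \<mu> = sets borel"
    and "(\<integral>\<^sup>+ x. ennreal (x^2) \<partial>\<mu>) = \<infinity>"
    and "M > 0"
  shows "\<exists>m0::nat. \<forall>m > m0.
           measure (PiM ({..<m} \<times> {..<m}) (\<lambda>_. \<mu>))
             {B \<in> space (PiM ({..<m} \<times> {..<m}) (\<lambda>_. \<mu>)). op_norm m B \<ge> M * sqrt (real m)}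
           \<ge> 1 - exp (- (M^2) * real m)"
proof -
  obtain K where "K > 0" and K: "2 * M^2 \<le> (\<integral>x. min (x^2) K \<partial>\<mu>)"
    using truncated_second_moment_unbounded[OF assms(1-3)] by blast
  have m_large: "K^2 \<le> 2 * M^2 * real m" if "nat \<lceil>K^2 / (2 * M^2)\<rceil> < m" for m
  proof -
    have "K^2 / (2 * M^2) \<le> real m"
      using that by linarith
    then show ?thesis
      using assms(4) by (simp add: divide_le_eq mult.commute)
  qed
  show ?thesis
    using assms(1,2,4) \<open>K > 0\<close> K m_large
    by (intro exI[of _ "nat \<lceil>K^2 / (2 * M^2)\<rceil>"] allI impI op_norm_ge_sqrt_with_high_prob) auto
qed

end
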